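(* Let $n\ge2$ and let $\mathcal{M}\subseteq\mathbb{R}^{n\times n}$ be path-connected. Suppose that for each $M\in\mathcal{M}$ both $M$ and $M^{[2]}$ are nonsingular, and that $\mathcal{M}$ contains a positive stable (resp. Hurwitz) matrix. Then every matrix in $\mathcal{M}$ is positive stable (resp. Hurwitz).
   Context: A real square matrix is positive stable if all its eigenvalues have positive real part, and Hurwitz if all its eigenvalues have negative real part. $\mathbb{R}^{n\times n}$ carries the Euclidean topology. For $M\in\mathbb{R}^{n\times n}$, $M^{[2]}$ is the second additive compound: the matrix of $u\wedge v\mapsto Mu\wedge v+u\wedge Mv$ on $\Lambda^2\mathbb{R}^n$ with respect to the basis $e_i\wedge e_j$ ($i<j$). *)

theory Defs
  imports "HOL-Analysis.Analysis"
begin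

definition cmat :: "real^'n^'n \<Rightarrow> complex^'n^'n" where
  "cmat M = (\<chi> i j. complex_of_real (M $ i $ j))"

definition is_eigenvalue :: "real^'n^'n \<Rightarrow> complex \<Rightarrow> bool" where
  "is_eigenvalue M l \<longleftrightarrow> (\<exists>v::complex^'n. v \<noteq> 0 \<and> cmat M *v v = l *s v)"

definition positive_stable :: "real^'n^'n \<Rightarrow> bool" where
  "positive_stable M \<longleftrightarrow> (\<forall>l. is_eigenvalue M l \<longrightarrow> Re l > 0)"

definition hurwitz :: "real^'n^'n \<Rightarrow> bool" where
  "hurwitz M \<longleftrightarrow> (\<forall>l. is_eigenvalue M l \<longrightarrow> Re l < 0)"

text \<open>Index set of the basis e_i \<and> e_j (i < j) of the second exterior power.\<close>
definition wedge_idx :: "('n::linorder \<times> 'n) set" where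
  "wedge_idx = {(i, j). i < j}"

text \<open>Coordinate of e_a \<and> e_b with respect to the basis vector e_i \<and> e_j (i < j).\<close>
definition wedge_coord :: "'n \<Rightarrow> 'n \<Rightarrow> ('n \<times> 'n) \<Rightarrow> real" where
  "wedge_coord a b p = (if (a, b) = p then 1 else if (b, a) = p then -1 else 0)"

text \<open>Second additive compound: entry at row (i,j), column (k,l) is the (i,j)-coordinate
  of M e_k \<and> e_l + e_k \<and> M e_l.\<close>
definition compound2 :: "real^('n::{finite,linorder})^('n::{finite,linorder}) \<Rightarrow> ('n \<times> 'n) \<Rightarrow> ('n \<times> 'n) \<Rightarrow> real" where
  "compound2 M p q =
     (\<Sum>r\<in>UNIV. M $ r $ fst q * wedge_coord r (snd q) p)
   + (\<Sum>r\<in>UNIV. M $ r $ snd q * wedge_coord (fst q) r p)"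

definition compound2_nonsingular :: "real^('n::{finite,linorder})^('n::{finite,linorder}) \<Rightarrow> bool" where
  "compound2_nonsingular M \<longleftrightarrow>
     (\<forall>x :: 'n \<times> 'n \<Rightarrow> real.
        (\<forall>p\<in>wedge_idx. (\<Sum>q\<in>wedge_idx. compound2 M p q * x q) = 0)
        \<longrightarrow> (\<forall>q\<in>wedge_idx. x q = 0))"

end

theory Submission
  imports Defs "HOL-Computational_Algebra.Fundamental_Theorem_Algebra"
begin

text \<open>
  Eigenvalues depend continuously on the matrix, so along the connected set the spectrum can only
  move from one open half plane into the other by crossing the imaginary axis. A zero eigenvalue is
  excluded by invertibility of \<open>M\<close>. An eigenvalue \<open>i\<omega>\<close> with \<open>\<omega> \<noteq> 0\<close> and eigenvector \<open>a + ib\<close>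
  gives \<open>M a = -\<omega> b\<close>, \<open>M b = \<omega> a\<close> with \<open>a, b\<close> linearly independent, and then \<open>a \<and> b\<close> is a nonzero
  vector in the kernel of \<open>M\<^sup>[\<^sup>2\<^sup>]\<close>.

  Continuity of the spectrum enters in two forms: the matrices with an eigenvalue in a closed set
  form a closed set (eigenvalues are bounded by the entries, and limits of zeros of
  \<open>det (z I - M\<^sub>k)\<close> are zeros), and so do the matrices with no eigenvalue in an open set \<open>U\<close>
  (the characteristic polynomial is monic of degree \<open>n\<close>, hence at least \<open>\<epsilon>\<^sup>n\<close> in modulus at a
  point at distance \<open>\<epsilon>\<close> from all its roots).
\<close>

section \<open>The second additive compound\<close>

definition wedge :: "real^'n \<Rightarrow> real^'n \<Rightarrow> 'n \<times> 'n \<Rightarrow> real" where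
  "wedge a b q = a $ fst q * b $ snd q - a $ snd q * b $ fst q"

lemma compound2_entry:
  fixes M :: "real^('n::{finite,linorder})^('n::{finite,linorder})"
  assumes "i \<noteq> j"
  shows "compound2 M (i,j) (k,l) =
     (if l = j then M$i$k else 0) - (if l = i then M$j$k else 0)
   + (if k = i then M$j$l else 0) - (if k = j then M$i$l else 0)"
proof -
  have coord: "wedge_coord a b (i,j) = (if a = i \<and> b = j then 1 else 0) - (if a = j \<and> b = i then 1 else 0)"
    for a b
    using assms unfolding wedge_coord_def by auto
  have delta: "(\<Sum>r\<in>UNIV. g r * (if r = s \<and> P then 1 else 0)) = (if P then g s else 0)"
    "(\<Sum>r\<in>UNIV. g r * (if P \<and> r = s then 1 else 0)) = (if P then g s else 0)"
    for g :: "'n \<Rightarrow> real" and s P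
    by (cases P; simp add: if_distrib cong: if_cong)+
  show ?thesis
    unfolding compound2_def coord right_diff_distrib sum_subtractf fst_conv snd_conv delta by simp
qed

lemma sum_UNIV_prod:
  fixes g :: "('a::finite \<times> 'b::finite) \<Rightarrow> 'c::comm_monoid_add"
  shows "(\<Sum>q\<in>UNIV. g q) = (\<Sum>k\<in>UNIV. \<Sum>l\<in>UNIV. g (k,l))"
  by (simp add: sum.cartesian_product UNIV_Times_UNIV[symmetric] del: UNIV_Times_UNIV)

lemma sum_UNIV_symmetric_eq_double_wedge_idx:
  fixes f :: "('n::{finite,linorder} \<times> 'n) \<Rightarrow> real"
  assumes sym: "\<And>k l. f (l,k) = f (k,l)" and diag: "\<And>k. f (k,k) = 0"
  shows "(\<Sum>q\<in>UNIV. f q) = 2 * (\<Sum>q\<in>wedge_idx. f q)"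
proof -
  define upper where "upper q = (if fst q < snd q then f q else 0)" for q
  have "f (k,l) = upper (k,l) + upper (l,k)" for k l
    using diag[of k] sym[of l k] unfolding upper_def by (cases k l rule: linorder_cases) auto
  then have split: "f q = upper q + upper (snd q, fst q)" for q
    by (metis prod.collapse)
  have swap: "(\<Sum>q\<in>UNIV. upper (snd q, fst q)) = (\<Sum>q\<in>UNIV. upper q)"
    by (rule sum.reindex_bij_witness[of _ prod.swap prod.swap]) auto
  have "(\<Sum>q\<in>UNIV. upper q) = (\<Sum>q\<in>{q\<in>UNIV. fst q < snd q}. f q)"
    unfolding upper_def by (rule sum.inter_filter[symmetric]) simp
  also have "{q\<in>UNIV. fst q < snd q} = wedge_idx"
    unfolding wedge_idx_def by auto
  finally show ?thesis
    by (subst split) (simp add: sum.distrib swap)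
qed

text \<open>The coordinate form of \<open>M\<^sup>[\<^sup>2\<^sup>](a \<and> b) = M a \<and> b + a \<and> M b = -\<omega> b \<and> b + \<omega> a \<and> a = 0\<close>.\<close>

lemma compound2_wedge_rotation_pair:
  fixes M :: "real^('n::{finite,linorder})^('n::{finite,linorder})"
  assumes Ma: "M *v a = (- w) *s b" and Mb: "M *v b = w *s a" and p: "p \<in> wedge_idx"
  shows "(\<Sum>q\<in>wedge_idx. compound2 M p q * wedge a b q) = 0"
proof -
  obtain i j where p_eq: "p = (i,j)" and "i \<noteq> j" using p unfolding wedge_idx_def by auto
  define f where "f q = compound2 M p q * wedge a b q" for q
  have Ma': "(\<Sum>k\<in>UNIV. M$r$k * a$k) = - w * b$r" and Mb': "(\<Sum>k\<in>UNIV. M$r$k * b$k) = w * a$r" for r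
    using Ma Mb unfolding vec_eq_iff matrix_vector_mult_def by auto
  have f_eq: "f (k,l) = (if l = j then M$i$k * wedge a b (k,l) else 0)
      - (if l = i then M$j$k * wedge a b (k,l) else 0)
      + (if k = i then M$j$l * wedge a b (k,l) else 0)
      - (if k = j then M$i$l * wedge a b (k,l) else 0)" for k l
    unfolding f_def p_eq compound2_entry[OF \<open>i \<noteq> j\<close>] by (simp add: algebra_simps)
  have row: "(\<Sum>k\<in>UNIV. M$r$k * wedge a b (k,s)) = b$s * (- w * b$r) - a$s * (w * a$r)"
    "(\<Sum>k\<in>UNIV. M$r$k * wedge a b (s,k)) = a$s * (w * a$r) - b$s * (- w * b$r)" for r s
    unfolding wedge_def Ma'[symmetric] Mb'[symmetric]
    by (simp_all add: algebra_simps sum_subtractf sum_distrib_left)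
  have sum_if: "(\<Sum>l\<in>UNIV. if P then g l else 0) = (if P then \<Sum>l\<in>UNIV. g l else 0)"
    for P and g :: "'n \<Rightarrow> real"
    by simp
  have "(\<Sum>q\<in>UNIV. f q) = (\<Sum>k\<in>UNIV. M$i$k * wedge a b (k,j)) - (\<Sum>k\<in>UNIV. M$j$k * wedge a b (k,i))
      + (\<Sum>l\<in>UNIV. M$j$l * wedge a b (i,l)) - (\<Sum>l\<in>UNIV. M$i$l * wedge a b (j,l))"
    unfolding sum_UNIV_prod f_eq sum_subtractf sum.distrib
    by (simp add: sum_if sum.delta sum.delta' if_distrib cong: if_cong)
  also have "\<dots> = 0"
    unfolding row by (simp add: algebra_simps)
  finally have "(\<Sum>q\<in>UNIV. f q) = 0" .
  moreover have "(\<Sum>q\<in>UNIV. f q) = 2 * (\<Sum>q\<in>wedge_idx. f q)"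
    by (rule sum_UNIV_symmetric_eq_double_wedge_idx)
      (simp_all add: f_eq wedge_def algebra_simps)
  ultimately show ?thesis unfolding f_def by simp
qed

lemma wedge_eq_0_imp_parallel:
  fixes a b :: "real^('n::{finite,linorder})"
  assumes "\<forall>q\<in>wedge_idx. wedge a b q = 0" and "a $ m \<noteq> 0"
  shows "b = (b $ m / a $ m) *s a"
proof -
  have "a$k * b$l = a$l * b$k" for k l
    using assms(1) unfolding wedge_idx_def wedge_def
    by (cases k l rule: linorder_cases) (auto simp: algebra_simps)
  then show ?thesis
    using assms(2) by (simp add: vec_eq_iff field_simps)
qed

section \<open>No eigenvalue on the imaginary axis\<close>

lemma is_eigenvalue_imaginary_real_form:
  assumes "is_eigenvalue M z" and "Re z = 0"
  obtains a b where "a \<noteq> 0 \<or> b \<noteq> 0" "M *v a = (- Im z) *s b" "M *v b = Im z *s a"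
proof -
  obtain v where "v \<noteq> 0" and v: "cmat M *v v = z *s v"
    using assms(1) unfolding is_eigenvalue_def by blast
  define a where "a = (\<chi> i. Re (v$i))"
  define b where "b = (\<chi> i. Im (v$i))"
  have row: "(\<Sum>k\<in>UNIV. complex_of_real (M$i$k) * v$k) = z * v$i" for i
    using v unfolding vec_eq_iff matrix_vector_mult_def cmat_def by simp
  have "a \<noteq> 0 \<or> b \<noteq> 0"
    using \<open>v \<noteq> 0\<close> by (auto simp: a_def b_def vec_eq_iff complex_eq_iff)
  moreover have "M *v a = (- Im z) *s b" "M *v b = Im z *s a"
    using arg_cong[OF row, of Re] arg_cong[OF row, of Im] \<open>Re z = 0\<close>
    unfolding a_def b_def vec_eq_iff matrix_vector_mult_def by (simp_all add: Re_sum Im_sum)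
  ultimately show thesis using that by blast
qed

lemma invertible_mult_vec_eq_0:
  fixes M :: "real^'n^'n"
  assumes "invertible M" "M *v x = 0"
  shows "x = 0"
  using assms invertible_left_inverse matrix_left_invertible_ker by metis

lemma Re_eigenvalue_nonzero:
  fixes M :: "real^('n::{finite,linorder})^('n::{finite,linorder})"
  assumes inv: "invertible M" and "compound2_nonsingular M" and "is_eigenvalue M z"
  shows "Re z \<noteq> 0"
proof
  assume "Re z = 0"
  then obtain a b where ab: "a \<noteq> 0 \<or> b \<noteq> 0"
    and Ma: "M *v a = (- Im z) *s b" and Mb: "M *v b = Im z *s a"
    using assms(3) is_eigenvalue_imaginary_real_form by metis
  show False
  proof (cases "Im z = 0 \<or> a = 0")
    case True
    then have "M *v a = 0" "M *v b = 0" using Ma Mb by auto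
    then show False using ab invertible_mult_vec_eq_0[OF inv] by blast
  next
    case False
    then obtain m where "a $ m \<noteq> 0" by (auto simp: vec_eq_iff)
    have "\<forall>q\<in>wedge_idx. wedge a b q = 0"
      using assms(2) compound2_wedge_rotation_pair[OF Ma Mb]
      unfolding compound2_nonsingular_def by blast
    then obtain c where b: "b = c *s a"
      using wedge_eq_0_imp_parallel \<open>a $ m \<noteq> 0\<close> by blast
    have "Im z *s a = c *s (M *v a)" using Mb by (simp add: b vector_scalar_commute)
    also have "\<dots> = (- Im z * c\<^sup>2) *s a" by (simp add: Ma b power2_eq_square)
    finally have "(Im z * (1 + c\<^sup>2)) *s a = 0" by (simp add: algebra_simps)
    moreover have "1 + c\<^sup>2 \<noteq> 0" using zero_le_power2[of c] by linarith
    ultimately show False using False by simp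
  qed
qed

section \<open>The characteristic polynomial\<close>

definition char_matrix :: "complex^('n::finite)^('n::finite) \<Rightarrow> complex \<Rightarrow> complex^'n^'n" where
  "char_matrix A z = (\<chi> i j. (if i = j then z else 0) - A$i$j)"

definition char_poly :: "complex^('n::finite)^('n::finite) \<Rightarrow> complex poly" where
  "char_poly A = det (\<chi> i j. (if i = j then [:0,1:] else 0) - [:A$i$j:])"

lemma poly_char_poly: "poly (char_poly A) z = det (char_matrix A z)"
  unfolding char_poly_def det_def char_matrix_def
  by (simp add: poly_sum poly_prod if_distrib[of "\<lambda>p. poly p z"] cong: if_cong)

lemma is_eigenvalue_iff_det_char_matrix:
  "is_eigenvalue M z \<longleftrightarrow> det (char_matrix (cmat M) z) = 0"
proof -
  have char_mult: "char_matrix A z *v v = z *s v - A *v v" for A and v :: "complex^'n"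
    unfolding char_matrix_def vec_eq_iff matrix_vector_mult_def
    by (simp add: left_diff_distrib sum_subtractf if_distrib[of "\<lambda>x. x * _"] cong: if_cong)
  have "det (char_matrix (cmat M) z) = 0 \<longleftrightarrow> \<not> (\<forall>v. char_matrix (cmat M) z *v v = 0 \<longrightarrow> v = 0)"
    using invertible_det_nz invertible_left_inverse matrix_left_invertible_ker by metis
  then show ?thesis
    unfolding is_eigenvalue_def char_mult by (auto simp: eq_commute[of "z *s _"])
qed

lemma degree_prod_le_card:
  assumes "finite S" and "\<And>i. i \<in> S \<Longrightarrow> degree (f i) \<le> (if P i then 1 else 0)"
  shows "degree (\<Prod>i\<in>S. f i) \<le> card {i\<in>S. P i}"
proof -
  have "degree (\<Prod>i\<in>S. f i) \<le> (\<Sum>i\<in>S. degree (f i))"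
    using degree_prod_sum_le[OF assms(1)] by (simp add: o_def)
  also have "\<dots> \<le> (\<Sum>i\<in>S. if P i then 1 else 0)"
    using assms(2) by (rule sum_mono)
  also have "\<dots> = card {i\<in>S. P i}"
    using assms(1) by (simp add: sum.If_cases Int_def)
  finally show ?thesis .
qed

lemma char_poly_monic:
  fixes A :: "complex^('n::finite)^('n::finite)"
  shows "degree (char_poly A) = CARD('n)" and "lead_coeff (char_poly A) = 1"
proof -
  define t where "t p = (of_int (sign p) :: complex poly) *
      (\<Prod>i\<in>UNIV. (if i = p i then [:0,1:] else 0) - [:A$i$p i:])" for p
  have char_poly_eq: "char_poly A = (\<Sum>p\<in>{p. p permutes (UNIV::'n set)}. t p)"
    unfolding char_poly_def det_def t_def by simp
  have degree_t: "degree (t p) \<le> card {i. p i = i}" for p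
  proof -
    have "degree (\<Prod>i\<in>UNIV. (if i = p i then [:0,1:] else 0) - [:A$i$p i:]) \<le> card {i\<in>UNIV. p i = i}"
      by (rule degree_prod_le_card) auto
    then show ?thesis
      unfolding t_def by (simp add: order.trans[OF degree_mult_le])
  qed
  have "degree (t p) < CARD('n)" if "p \<noteq> id" for p
  proof -
    from that obtain i where "p i \<noteq> i" by (auto simp: fun_eq_iff)
    then have "card {i. p i = i} < CARD('n)"
      by (intro psubset_card_mono) (auto simp: psubset_eq)
    then show ?thesis using degree_t[of p] by simp
  qed
  then have coeff_t: "coeff (t p) CARD('n) = 0" if "p \<noteq> id" for p
    using that by (intro coeff_eq_0) auto
  have t_id: "t id = (\<Prod>i\<in>UNIV. [:- A$i$i, 1:])"
    unfolding t_def by (simp add: sign_id)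
  have "degree (t id) = CARD('n)"
    unfolding t_id by (subst degree_prod_eq_sum_degree) auto
  moreover have "lead_coeff (t id) = 1"
    unfolding t_id lead_coeff_prod by simp
  ultimately have "coeff (t id) CARD('n) = 1" by simp
  with coeff_t have lead: "coeff (char_poly A) CARD('n) = 1"
    unfolding char_poly_eq coeff_sum
    by (subst sum.remove[of _ id]) (auto simp: permutes_id finite_permutations)
  have "degree (char_poly A) \<le> CARD('n)"
    unfolding char_poly_eq using order.trans[OF degree_t card_mono[of "UNIV :: 'n set"]]
    by (intro degree_sum_le) (auto simp: finite_permutations)
  moreover have "CARD('n) \<le> degree (char_poly A)"
    using lead by (intro le_degree) simp
  ultimately show "degree (char_poly A) = CARD('n)" by simp
  with lead show "lead_coeff (char_poly A) = 1" by simp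
qed

lemma norm_poly_ge_pow_root_distance:
  fixes p :: "complex poly"
  assumes "lead_coeff p = 1" and "0 \<le> e"
    and roots: "\<And>z. poly p z = 0 \<Longrightarrow> e \<le> dist z l"
  shows "e ^ degree p \<le> cmod (poly p l)"
proof -
  obtain root where "smult (lead_coeff p) (\<Prod>i<degree p. [:- root i, 1:]) = p"
    by (rule complex_poly_decompose')
  then have p_eq: "p = (\<Prod>i<degree p. [:- root i, 1:])"
    using assms(1) by simp
  have poly_p: "poly p x = (\<Prod>i<degree p. x - root i)" for x
    using arg_cong[OF p_eq, of "\<lambda>q. poly q x"] by (simp add: poly_prod)
  have "e \<le> cmod (l - root i)" if "i < degree p" for i
  proof -
    have "poly p (root i) = 0" unfolding poly_p using that by (auto intro: prod_zero)
    then have "e \<le> dist (root i) l" by (rule roots)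
    then show ?thesis by (simp add: dist_norm norm_minus_commute)
  qed
  then have "(\<Prod>i<degree p. e) \<le> (\<Prod>i<degree p. cmod (l - root i))"
    using \<open>0 \<le> e\<close> by (intro prod_mono) auto
  then show ?thesis by (simp add: poly_p prod_norm)
qed

section \<open>Continuity of the spectrum\<close>

lemma norm_eigenvalue_le_sum_abs:
  assumes "is_eigenvalue N z"
  shows "cmod z \<le> (\<Sum>i\<in>UNIV. \<Sum>j\<in>UNIV. \<bar>N$i$j\<bar>)"
proof -
  obtain v where "v \<noteq> 0" and v: "cmat N *v v = z *s v"
    using assms unfolding is_eigenvalue_def by blast
  define m where "m = Max (range (\<lambda>j. cmod (v$j)))"
  have "m \<in> range (\<lambda>j. cmod (v$j))" unfolding m_def by (rule Max_in) auto
  then obtain i where m: "m = cmod (v$i)" by auto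
  have le_m: "cmod (v$j) \<le> m" for j unfolding m_def by (rule Max_ge) auto
  have "0 < m"
    using \<open>v \<noteq> 0\<close> le_m m by (auto simp: vec_eq_iff intro: order.trans)
  have "cmod z * m = cmod (\<Sum>k\<in>UNIV. complex_of_real (N$i$k) * v$k)"
    using v m unfolding vec_eq_iff matrix_vector_mult_def cmat_def by (simp add: norm_mult)
  also have "\<dots> \<le> (\<Sum>k\<in>UNIV. \<bar>N$i$k\<bar> * m)"
    by (rule order.trans[OF norm_sum sum_mono]) (simp add: norm_mult mult_left_mono le_m)
  finally have "cmod z * m \<le> (\<Sum>k\<in>UNIV. \<bar>N$i$k\<bar>) * m"
    by (simp add: sum_distrib_right)
  then have "cmod z \<le> (\<Sum>k\<in>UNIV. \<bar>N$i$k\<bar>)"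
    using \<open>0 < m\<close> by simp
  also have "\<dots> \<le> (\<Sum>i\<in>UNIV. \<Sum>j\<in>UNIV. \<bar>N$i$j\<bar>)"
    by (rule member_le_sum) (auto intro: sum_nonneg)
  finally show ?thesis .
qed

lemma tendsto_det_char_matrix:
  fixes Ns :: "'b \<Rightarrow> real^('n::finite)^('n::finite)"
  assumes "(Ns \<longlongrightarrow> N) F" "(zs \<longlongrightarrow> z) F"
  shows "((\<lambda>k. det (char_matrix (cmat (Ns k)) (zs k))) \<longlongrightarrow> det (char_matrix (cmat N) z)) F"
proof -
  have diag: "((\<lambda>k. if c then zs k else 0) \<longlongrightarrow> (if c then z else 0)) F" for c
    using assms(2) by (cases c) auto
  show ?thesis
    unfolding det_def char_matrix_def cmat_def by (simp, intro tendsto_intros diag assms(1))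
qed

lemma closed_has_eigenvalue_in:
  fixes F :: "complex set"
  assumes "closed F"
  shows "closed {N::real^('n::finite)^('n::finite). \<exists>z\<in>F. is_eigenvalue N z}"
  unfolding closed_sequential_limits
proof (intro allI impI, elim conjE)
  fix Ns :: "nat \<Rightarrow> real^'n^'n" and N
  assume "\<forall>n. Ns n \<in> {N. \<exists>z\<in>F. is_eigenvalue N z}" and lim: "Ns \<longlonglongrightarrow> N"
  then have "\<forall>n. \<exists>z. z \<in> F \<and> is_eigenvalue (Ns n) z" by blast
  then obtain zs where zs: "\<forall>n. zs n \<in> F \<and> is_eigenvalue (Ns n) (zs n)"
    by metis
  define B where "B N = (\<Sum>i\<in>UNIV. \<Sum>j\<in>UNIV. \<bar>(N::real^'n^'n)$i$j\<bar>)" for N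
  have "(\<lambda>n. B (Ns n)) \<longlonglongrightarrow> B N" unfolding B_def by (intro tendsto_intros lim)
  then have "Bseq (\<lambda>n. B (Ns n))" by (rule convergent_imp_Bseq[OF convergentI])
  then obtain K where K: "\<And>n. norm (B (Ns n)) \<le> K" by (rule BseqE) blast
  have "zs n \<in> cball 0 K" for n
    using norm_eigenvalue_le_sum_abs[of "Ns n" "zs n"] zs K[of n] unfolding B_def by simp
  then obtain l r where r: "strict_mono r" and lim_zs: "(zs \<circ> r) \<longlonglongrightarrow> l"
    using seq_compactE[OF compact_imp_seq_compact[OF compact_cball]] by blast
  have "l \<in> F" using closed_sequentially[OF \<open>closed F\<close> _ lim_zs] zs by simp
  have "(\<lambda>k. det (char_matrix (cmat ((Ns \<circ> r) k)) ((zs \<circ> r) k))) \<longlonglongrightarrow> det (char_matrix (cmat N) l)"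
    by (rule tendsto_det_char_matrix[OF LIMSEQ_subseq_LIMSEQ[OF lim r] lim_zs])
  moreover have "(\<lambda>k. det (char_matrix (cmat ((Ns \<circ> r) k)) ((zs \<circ> r) k))) = (\<lambda>k. 0)"
    using zs is_eigenvalue_iff_det_char_matrix by auto
  ultimately have "det (char_matrix (cmat N) l) = 0" by (simp add: LIMSEQ_const_iff)
  then show "N \<in> {N. \<exists>z\<in>F. is_eigenvalue N z}"
    using \<open>l \<in> F\<close> is_eigenvalue_iff_det_char_matrix by blast
qed

lemma closed_no_eigenvalue_in:
  fixes U :: "complex set"
  assumes "open U"
  shows "closed {N::real^('n::finite)^('n::finite). \<forall>z\<in>U. \<not> is_eigenvalue N z}"
  unfolding closed_sequential_limits
proof (intro allI impI, elim conjE)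
  fix Ns :: "nat \<Rightarrow> real^'n^'n" and N
  assume H: "\<forall>n. Ns n \<in> {N. \<forall>z\<in>U. \<not> is_eigenvalue N z}" and lim: "Ns \<longlonglongrightarrow> N"
  show "N \<in> {N. \<forall>z\<in>U. \<not> is_eigenvalue N z}"
  proof safe
    fix l assume "l \<in> U" and "is_eigenvalue N l"
    obtain e where "e > 0" and "ball l e \<subseteq> U" using openE[OF \<open>open U\<close> \<open>l \<in> U\<close>] .
    have "e ^ CARD('n) \<le> cmod (det (char_matrix (cmat (Ns n)) l))" for n
    proof -
      have "e \<le> dist z l" if "poly (char_poly (cmat (Ns n))) z = 0" for z
      proof -
        have "z \<notin> ball l e"
          using that H \<open>ball l e \<subseteq> U\<close> by (auto simp: poly_char_poly is_eigenvalue_iff_det_char_matrix)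
        then show ?thesis by (simp add: dist_commute)
      qed
      then have "e ^ degree (char_poly (cmat (Ns n))) \<le> cmod (poly (char_poly (cmat (Ns n))) l)"
        using \<open>e > 0\<close> by (intro norm_poly_ge_pow_root_distance[OF char_poly_monic(2)]) auto
      then show ?thesis
        by (simp add: char_poly_monic poly_char_poly)
    qed
    moreover have "(\<lambda>n. cmod (det (char_matrix (cmat (Ns n)) l))) \<longlonglongrightarrow> 0"
      using tendsto_det_char_matrix[OF lim tendsto_const, of l] \<open>is_eigenvalue N l\<close>
      by (auto simp: is_eigenvalue_iff_det_char_matrix intro: tendsto_norm_zero)
    ultimately have "e ^ CARD('n) \<le> 0" by (intro LIMSEQ_le_const) auto
    then show False using zero_less_power[OF \<open>e > 0\<close>, of "CARD('n)"] by linarith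
  qed
qed

text \<open>
  If on a connected set of matrices no eigenvalue lies in \<open>F - U\<close> or \<open>U - F\<close>, the set of
  matrices without eigenvalues in \<open>F\<close> is open (as the complement of a closed set) and closed
  (as it equals the set of matrices without eigenvalues in \<open>U\<close>).
\<close>

lemma connected_no_eigenvalue_in:
  fixes S :: "(real^('n::finite)^('n::finite)) set"
  assumes "connected S" and "closed F" and "open U"
    and same: "\<And>M z. M \<in> S \<Longrightarrow> is_eigenvalue M z \<Longrightarrow> z \<in> F \<longleftrightarrow> z \<in> U"
    and "M0 \<in> S" "\<forall>z\<in>F. \<not> is_eigenvalue M0 z" and "M \<in> S"
  shows "\<forall>z\<in>F. \<not> is_eigenvalue M z"
proof -
  define P where "P = {M\<in>S. \<forall>z\<in>F. \<not> is_eigenvalue M z}"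
  have "P = S \<inter> - {N. \<exists>z\<in>F. is_eigenvalue N z}" unfolding P_def by auto
  then have "openin (top_of_set S) P"
    using closed_has_eigenvalue_in[OF \<open>closed F\<close>] by (metis open_Compl openin_open_Int)
  moreover have "P = S \<inter> {N. \<forall>z\<in>U. \<not> is_eigenvalue N z}" unfolding P_def using same by blast
  then have "closedin (top_of_set S) P"
    using closed_no_eigenvalue_in[OF \<open>open U\<close>] by (metis closedin_closed_Int)
  moreover have "M0 \<in> P" using assms(5,6) unfolding P_def by blast
  ultimately have "P = S" using \<open>connected S\<close> unfolding connected_clopen by blast
  then show ?thesis using \<open>M \<in> S\<close> unfolding P_def by blast
qed

theorem lemma2p6:
  fixes S :: "(real^('n::{finite,linorder})^('n::{finite,linorder})) set"
  assumes "CARD('n) \<ge> 2"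
    and "path_connected S"
    and "\<And>M. M \<in> S \<Longrightarrow> invertible M \<and> compound2_nonsingular M"
  shows "((\<exists>M\<in>S. positive_stable M) \<longrightarrow> (\<forall>M\<in>S. positive_stable M))
       \<and> ((\<exists>M\<in>S. hurwitz M) \<longrightarrow> (\<forall>M\<in>S. hurwitz M))"
proof -
  have "connected S" using assms(2) by (rule path_connected_imp_connected)
  have closed_halfplanes: "closed {z::complex. Re z \<le> 0}" "closed {z::complex. Re z \<ge> 0}"
    by (intro closed_Collect_le continuous_intros)+
  have open_halfplanes: "open {z::complex. Re z < 0}" "open {z::complex. Re z > 0}"
    by (intro open_Collect_less continuous_intros)+
  have Re_nonzero: "Re z \<noteq> 0" if "M \<in> S" "is_eigenvalue M z" for M z
    using Re_eigenvalue_nonzero assms(3)[OF that(1)] that(2) by blast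
  have propagate: "\<forall>z\<in>F. \<not> is_eigenvalue M z"
    if "closed F" "open U" "\<And>z. Re z \<noteq> 0 \<Longrightarrow> z \<in> F \<longleftrightarrow> z \<in> U"
      and "M0 \<in> S" "\<forall>z\<in>F. \<not> is_eigenvalue M0 z" "M \<in> S" for F U M0 M
    by (rule connected_no_eigenvalue_in[OF \<open>connected S\<close> that(1,2) _ that(4-6)])
      (use that(3) Re_nonzero in blast)
  have "Re z \<noteq> 0 \<Longrightarrow> z \<in> {z. Re z \<le> 0} \<longleftrightarrow> z \<in> {z. Re z < 0}"
    and "Re z \<noteq> 0 \<Longrightarrow> z \<in> {z. Re z \<ge> 0} \<longleftrightarrow> z \<in> {z. Re z > 0}" for z
    by auto
  note propagate_halfplanes =
    propagate[OF closed_halfplanes(1) open_halfplanes(1) this(1)]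
    propagate[OF closed_halfplanes(2) open_halfplanes(2) this(2)]
  have "positive_stable M \<longleftrightarrow> (\<forall>z\<in>{z. Re z \<le> 0}. \<not> is_eigenvalue M z)"
    and "hurwitz M \<longleftrightarrow> (\<forall>z\<in>{z. Re z \<ge> 0}. \<not> is_eigenvalue M z)" for M
    unfolding positive_stable_def hurwitz_def by (auto simp: not_le)
  then show ?thesis
    using propagate_halfplanes by metis
qed

end
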